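(* Let $P$ be a finite ranked poset with rank function $\mathrm{rk}$. Let $R_1$ and $R_2$ be restriction functions on $P$ related by $R_1(p)=\{k+\mathrm{rk}(p):k\in R_2(p)\}$ for all $p\in P$. Then $R_1$ is consistent if and only if $R_2$ is weakly-consistent. Moreover, in this case $\Gamma(P,R_1)$ is isomorphic to $\Gamma'(P,R_2)$.
   Context: $P$ is ranked with rank function $\mathrm{rk}:P\to\mathbb{Z}$ if $x\lessdot y$ implies $\mathrm{rk}(y)=\mathrm{rk}(x)+1$. A restriction function assigns to each $p$ a nonempty finite subset of $\mathbb{Z}$. $R$ is consistent (resp. weakly-consistent) if for every cover $x\lessdot y$, $\min R(x)<\min R(y)$ and $\max R(x)<\max R(y)$ (resp. with $\le$ in place of $<$). $R(p)^*=R(p)\setminus\{\max R(p)\}$; $R(p)_{>k}$ is the smallest element of $R(p)$ greater than $k$; $R(p)_{<k}$ (resp. $R(p)_{\le k}$) is the largest element of $R(p)$ less than (resp. at most) $k$. $\Gamma(P,R)$ (for consistent $R$) is the poset on $\{(p,k):k\in R(p)^*\}$ whose order is the reflexive–transitive closure of: $(p_1,k_1)\lessdot(p_2,k_2)$ iff (1) $p_1=p_2$ and $R(p_1)_{>k_2}=k_1$, or (2) $p_1\lessdot p_2$, $k_1=R(p_1)_{<k_2}$, $k_1\ne\max R(p_1)$, and no $k\in R(p_2)$, $k>k_2$, has $R(p_1)_{<k}=k_1$. $\Gamma'(P,R)$ (for weakly-consistent $R$) is defined on the same kind of set by: (1) $p_1=p_2$ and $R(p_1)_{>k_2}=k_1$,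 or (2) $p_1\lessdot p_2$, $R(p_1)_{\le k_2}=k_1$, and no $k\in R(p_2)$, $k>k_2$, has $R(p_1)_{\le k}=k_1$. *)

theory Defs
  imports Main
begin

definition poset_on :: "'a set \<Rightarrow> ('a \<Rightarrow> 'a \<Rightarrow> bool) \<Rightarrow> bool" where
  "poset_on P le \<longleftrightarrow>
     (\<forall>x\<in>P. le x x) \<and>
     (\<forall>x\<in>P. \<forall>y\<in>P. le x y \<and> le y x \<longrightarrow> x = y) \<and>
     (\<forall>x\<in>P. \<forall>y\<in>P. \<forall>z\<in>P. le x y \<and> le y z \<longrightarrow> le x z)"

definition covers :: "'a set \<Rightarrow> ('a \<Rightarrow> 'a \<Rightarrow> bool) \<Rightarrow> 'a \<Rightarrow> 'a \<Rightarrow> bool" where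
  "covers P le x y \<longleftrightarrow> x \<in> P \<and> y \<in> P \<and> le x y \<and> x \<noteq> y \<and>
     \<not> (\<exists>z\<in>P. le x z \<and> le z y \<and> z \<noteq> x \<and> z \<noteq> y)"

definition ranked :: "'a set \<Rightarrow> ('a \<Rightarrow> 'a \<Rightarrow> bool) \<Rightarrow> ('a \<Rightarrow> int) \<Rightarrow> bool" where
  "ranked P le rk \<longleftrightarrow> (\<forall>x y. covers P le x y \<longrightarrow> rk y = rk x + 1)"

definition restriction_fun :: "'a set \<Rightarrow> ('a \<Rightarrow> int set) \<Rightarrow> bool" where
  "restriction_fun P R \<longleftrightarrow> (\<forall>p\<in>P. R p \<noteq> {} \<and> finite (R p))"

definition consistent :: "'a set \<Rightarrow> ('a \<Rightarrow> 'a \<Rightarrow> bool) \<Rightarrow> ('a \<Rightarrow> int set) \<Rightarrow> bool" where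
  "consistent P le R \<longleftrightarrow> (\<forall>x y. covers P le x y \<longrightarrow>
      Min (R x) < Min (R y) \<and> Max (R x) < Max (R y))"

definition weakly_consistent :: "'a set \<Rightarrow> ('a \<Rightarrow> 'a \<Rightarrow> bool) \<Rightarrow> ('a \<Rightarrow> int set) \<Rightarrow> bool" where
  "weakly_consistent P le R \<longleftrightarrow> (\<forall>x y. covers P le x y \<longrightarrow>
      Min (R x) \<le> Min (R y) \<and> Max (R x) \<le> Max (R y))"

text \<open>Partial operations on finite sets of integers, expressed as predicates:
  next_gt S k m  means  S_{>k} = m  (m is the smallest element of S greater than k);
  prev_lt S k m  means  S_{<k} = m;  prev_le S k m  means  S_{\<le>k} = m.\<close>
definition next_gt :: "int set \<Rightarrow> int \<Rightarrow> int \<Rightarrow> bool" where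
  "next_gt S k m \<longleftrightarrow> m \<in> S \<and> k < m \<and> (\<forall>x\<in>S. k < x \<longrightarrow> m \<le> x)"

definition prev_lt :: "int set \<Rightarrow> int \<Rightarrow> int \<Rightarrow> bool" where
  "prev_lt S k m \<longleftrightarrow> m \<in> S \<and> m < k \<and> (\<forall>x\<in>S. x < k \<longrightarrow> x \<le> m)"

definition prev_le :: "int set \<Rightarrow> int \<Rightarrow> int \<Rightarrow> bool" where
  "prev_le S k m \<longleftrightarrow> m \<in> S \<and> m \<le> k \<and> (\<forall>x\<in>S. x \<le> k \<longrightarrow> x \<le> m)"

definition gamma_set :: "'a set \<Rightarrow> ('a \<Rightarrow> int set) \<Rightarrow> ('a \<times> int) set" where
  "gamma_set P R = {(p, k). p \<in> P \<and> k \<in> R p - {Max (R p)}}"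

definition gamma_cov :: "'a set \<Rightarrow> ('a \<Rightarrow> 'a \<Rightarrow> bool) \<Rightarrow> ('a \<Rightarrow> int set)
    \<Rightarrow> 'a \<times> int \<Rightarrow> 'a \<times> int \<Rightarrow> bool" where
  "gamma_cov P le R a b \<longleftrightarrow> a \<in> gamma_set P R \<and> b \<in> gamma_set P R \<and>
     (let (p1, k1) = a; (p2, k2) = b in
       (p1 = p2 \<and> next_gt (R p1) k2 k1) \<or>
       (covers P le p1 p2 \<and> prev_lt (R p1) k2 k1 \<and> k1 \<noteq> Max (R p1) \<and>
        \<not> (\<exists>k\<in>R p2. k > k2 \<and> prev_lt (R p1) k k1)))"

definition gamma'_cov :: "'a set \<Rightarrow> ('a \<Rightarrow> 'a \<Rightarrow> bool) \<Rightarrow> ('a \<Rightarrow> int set)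
    \<Rightarrow> 'a \<times> int \<Rightarrow> 'a \<times> int \<Rightarrow> bool" where
  "gamma'_cov P le R a b \<longleftrightarrow> a \<in> gamma_set P R \<and> b \<in> gamma_set P R \<and>
     (let (p1, k1) = a; (p2, k2) = b in
       (p1 = p2 \<and> next_gt (R p1) k2 k1) \<or>
       (covers P le p1 p2 \<and> prev_le (R p1) k2 k1 \<and>
        \<not> (\<exists>k\<in>R p2. k > k2 \<and> prev_le (R p1) k k1)))"

definition gamma_le :: "'a set \<Rightarrow> ('a \<Rightarrow> 'a \<Rightarrow> bool) \<Rightarrow> ('a \<Rightarrow> int set)
    \<Rightarrow> 'a \<times> int \<Rightarrow> 'a \<times> int \<Rightarrow> bool" where
  "gamma_le P le R = (gamma_cov P le R)\<^sup>*\<^sup>*"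

definition gamma'_le :: "'a set \<Rightarrow> ('a \<Rightarrow> 'a \<Rightarrow> bool) \<Rightarrow> ('a \<Rightarrow> int set)
    \<Rightarrow> 'a \<times> int \<Rightarrow> 'a \<times> int \<Rightarrow> bool" where
  "gamma'_le P le R = (gamma'_cov P le R)\<^sup>*\<^sup>*"

definition poset_iso :: "'b set \<Rightarrow> ('b \<Rightarrow> 'b \<Rightarrow> bool) \<Rightarrow> 'c set \<Rightarrow> ('c \<Rightarrow> 'c \<Rightarrow> bool) \<Rightarrow> bool" where
  "poset_iso A leA B leB \<longleftrightarrow> (\<exists>f. bij_betw f A B \<and>
      (\<forall>x\<in>A. \<forall>y\<in>A. leA x y \<longleftrightarrow> leB (f x) (f y)))"

end

theory Submission
  imports Defs
begin

text \<open>The map (p, k) \<mapsto> (p, k - rk p) identifies the two ground sets. Because ranks go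
  up by exactly one along covers, the strict comparisons in R1 at level rk p become the weak
  comparisons in R2 at level rk p, and the generating relations of \<Gamma> and \<Gamma>' correspond
  to each other term by term; so do their reflexive-transitive closures. Consistency is only
  needed for the first claim: the isomorphism holds for every shifted pair R1, R2.\<close>

lemma shift_mem_iff: "x \<in> (\<lambda>k. k + c) ` S \<longleftrightarrow> x - c \<in> (S :: int set)"
  by (auto simp: image_iff) (metis diff_add_cancel)

lemma Max_shift: "finite (S :: int set) \<Longrightarrow> S \<noteq> {} \<Longrightarrow> Max ((\<lambda>k. k + c) ` S) = Max S + c"
  by (rule Max_eqI) auto

lemma Min_shift: "finite (S :: int set) \<Longrightarrow> S \<noteq> {} \<Longrightarrow> Min ((\<lambda>k. k + c) ` S) = Min S + c"
  by (rule Min_eqI) auto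

lemma next_gt_shift: "next_gt ((\<lambda>k. k + c) ` S) k m \<longleftrightarrow> next_gt S (k - c) (m - c)"
  unfolding next_gt_def shift_mem_iff by (auto simp: image_iff)

lemma prev_lt_shift: "prev_lt ((\<lambda>k. k + c) ` S) k m \<longleftrightarrow> prev_le S (k - c - 1) (m - c)"
  unfolding prev_lt_def prev_le_def shift_mem_iff by (auto simp: image_iff)

lemma rtranclp_iff_conj_bij:
  assumes rel: "\<And>a b. s (f a) (f b) \<longleftrightarrow> r a b"
    and inv: "\<And>c. f (g c) = c" "\<And>c. g (f c) = c"
  shows "r\<^sup>*\<^sup>* a b \<longleftrightarrow> s\<^sup>*\<^sup>* (f a) (f b)"
proof
  assume "r\<^sup>*\<^sup>* a b"
  then show "s\<^sup>*\<^sup>* (f a) (f b)"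
    by (induction rule: rtranclp_induct) (auto simp: rel intro: rtranclp.rtrancl_into_rtrancl)
next
  have "r\<^sup>*\<^sup>* (g c) (g d)" if "s\<^sup>*\<^sup>* c d" for c d
    using that
  proof (induction rule: rtranclp_induct)
    case (step y z)
    have "r (g y) (g z)" using rel[of "g y" "g z"] step(2) by (simp add: inv)
    with step(3) show ?case by (auto intro: rtranclp.rtrancl_into_rtrancl)
  qed simp
  moreover assume "s\<^sup>*\<^sup>* (f a) (f b)"
  ultimately show "r\<^sup>*\<^sup>* a b" by (metis inv(2))
qed

definition unshift :: "('a \<Rightarrow> int) \<Rightarrow> 'a \<times> int \<Rightarrow> 'a \<times> int" where
  "unshift rk = (\<lambda>(p, k). (p, k - rk p))"

definition reshift :: "('a \<Rightarrow> int) \<Rightarrow> 'a \<times> int \<Rightarrow> 'a \<times> int" where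
  "reshift rk = (\<lambda>(p, k). (p, k + rk p))"

lemma unshift_reshift [simp]: "unshift rk (reshift rk c) = c"
  and reshift_unshift [simp]: "reshift rk (unshift rk c) = c"
  by (cases c, simp add: unshift_def reshift_def)+

context
  fixes P :: "'a set" and le :: "'a \<Rightarrow> 'a \<Rightarrow> bool" and rk :: "'a \<Rightarrow> int"
    and R1 R2 :: "'a \<Rightarrow> int set"
  assumes ranked: "ranked P le rk"
    and restr: "restriction_fun P R2"
    and shift: "\<forall>p\<in>P. R1 p = (\<lambda>k. k + rk p) ` R2 p"
begin

private lemma R1_eq: "p \<in> P \<Longrightarrow> R1 p = (\<lambda>k. k + rk p) ` R2 p"
  using shift by blast

private lemma R2_finite_nonempty: "p \<in> P \<Longrightarrow> finite (R2 p) \<and> R2 p \<noteq> {}"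
  using restr by (auto simp: restriction_fun_def)

private lemma covers_rk: "covers P le p q \<Longrightarrow> p \<in> P \<and> q \<in> P \<and> rk q = rk p + 1"
  using ranked by (auto simp: covers_def ranked_def)

lemma consistent_iff_weakly_consistent_shift: "consistent P le R1 \<longleftrightarrow> weakly_consistent P le R2"
  unfolding consistent_def weakly_consistent_def
proof (intro iff_allI imp_cong[OF refl])
  fix x y
  assume "covers P le x y"
  then show "(Min (R1 x) < Min (R1 y) \<and> Max (R1 x) < Max (R1 y)) \<longleftrightarrow>
      (Min (R2 x) \<le> Min (R2 y) \<and> Max (R2 x) \<le> Max (R2 y))"
    using covers_rk R1_eq R2_finite_nonempty by (simp add: Max_shift Min_shift)
qed

lemma unshift_in_gamma_set_iff: "unshift rk a \<in> gamma_set P R2 \<longleftrightarrow> a \<in> gamma_set P R1"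
proof (cases a)
  case (Pair p k)
  show ?thesis
  proof (cases "p \<in> P")
    case True
    then show ?thesis using R1_eq R2_finite_nonempty
      by (auto simp: Pair unshift_def gamma_set_def shift_mem_iff Max_shift)
  qed (simp add: Pair unshift_def gamma_set_def)
qed

lemma gamma'_cov_unshift_iff:
  "gamma'_cov P le R2 (unshift rk a) (unshift rk b) \<longleftrightarrow> gamma_cov P le R1 a b"
proof (cases "a \<in> gamma_set P R1 \<and> b \<in> gamma_set P R1")
  case False
  then show ?thesis by (auto simp: gamma_cov_def gamma'_cov_def unshift_in_gamma_set_iff)
next
  case True
  obtain p1 k1 p2 k2 where ab: "a = (p1, k1)" "b = (p2, k2)" by (cases a, cases b)
  have p1: "p1 \<in> P" and p2: "p2 \<in> P" and k1: "k1 \<noteq> Max (R1 p1)"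
    using True ab by (auto simp: gamma_set_def)
  have in_gamma_set: "(p1, k1 - rk p1) \<in> gamma_set P R2" "(p2, k2 - rk p2) \<in> gamma_set P R2"
    using True unshift_in_gamma_set_iff by (auto simp: ab unshift_def)
  have same_point: "next_gt (R1 p1) k2 k1 \<longleftrightarrow> next_gt (R2 p1) (k2 - rk p1) (k1 - rk p1)"
    using R1_eq[OF p1] by (simp add: next_gt_shift)
  have cover: "(prev_lt (R1 p1) k2 k1 \<and> \<not> (\<exists>k\<in>R1 p2. k > k2 \<and> prev_lt (R1 p1) k k1)) \<longleftrightarrow>
      (prev_le (R2 p1) (k2 - rk p2) (k1 - rk p1) \<and>
       \<not> (\<exists>k\<in>R2 p2. k > k2 - rk p2 \<and> prev_le (R2 p1) k (k1 - rk p1)))"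
    if "covers P le p1 p2"
  proof -
    have rk2: "rk p2 = rk p1 + 1" using covers_rk[OF that] by simp
    have "prev_lt (R1 p1) k k1 \<longleftrightarrow> prev_le (R2 p1) (k - rk p2) (k1 - rk p1)" for k
      using R1_eq[OF p1] rk2 by (simp add: prev_lt_shift algebra_simps)
    then show ?thesis
      using R1_eq[OF p2] by (auto simp: algebra_simps)
  qed
  show ?thesis
    using True k1 in_gamma_set same_point cover
    by (auto simp: gamma_cov_def gamma'_cov_def ab unshift_def)
qed

lemma gamma_le_iff_gamma'_le_unshift:
  "gamma_le P le R1 a b \<longleftrightarrow> gamma'_le P le R2 (unshift rk a) (unshift rk b)"
  unfolding gamma_le_def gamma'_le_def
  by (rule rtranclp_iff_conj_bij[where f = "unshift rk" and g = "reshift rk"])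
    (simp_all add: gamma'_cov_unshift_iff)

lemma poset_iso_gamma_gamma'_shift:
  "poset_iso (gamma_set P R1) (gamma_le P le R1) (gamma_set P R2) (gamma'_le P le R2)"
proof -
  have "bij_betw (unshift rk) (gamma_set P R1) (gamma_set P R2)"
    by (rule bij_betw_byWitness[where f' = "reshift rk"])
      (auto simp: unshift_in_gamma_set_iff[symmetric])
  then show ?thesis
    unfolding poset_iso_def using gamma_le_iff_gamma'_le_unshift by blast
qed

end

theorem theorem2p26:
  fixes P :: "'a set" and le :: "'a \<Rightarrow> 'a \<Rightarrow> bool" and rk :: "'a \<Rightarrow> int"
    and R1 R2 :: "'a \<Rightarrow> int set"
  assumes "finite P" and "poset_on P le" and "ranked P le rk"
    and "restriction_fun P R1" and "restriction_fun P R2"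
    and "\<forall>p\<in>P. R1 p = (\<lambda>k. k + rk p) ` R2 p"
  shows "(consistent P le R1 \<longleftrightarrow> weakly_consistent P le R2) \<and>
    (consistent P le R1 \<longrightarrow>
       poset_iso (gamma_set P R1) (gamma_le P le R1) (gamma_set P R2) (gamma'_le P le R2))"
  using consistent_iff_weakly_consistent_shift[OF assms(3,5,6)]
    poset_iso_gamma_gamma'_shift[OF assms(3,5,6)]
  by blast

end
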